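(* Let $l,u,\hbar$ satisfy the standing assumptions below. (i) If $S\in C^1_G(0,T)$, then the mappings $t\mapsto L_t(S_t)$ and $t\mapsto U_t(S_t)$ are continuous. In particular, $t\mapsto L_t(0)$ and $t\mapsto U_t(0)$ are continuous and bounded. (ii) If $t\in[0,T]$ and $X,X'\in L^1_G(\Omega_t)$, then $|L_t(X)-L_t(X')|\le\frac{2\overline{c}}{\underline{c}}\hat{\mathbb{E}}[|X-X'|]$ and $|U_t(X)-U_t(X')|\le\frac{2\overline{c}}{\underline{c}}\hat{\mathbb{E}}[|X-X'|]$.
   Context: Setting: $\hat{\mathbb{E}}$ is the $G$-expectation on $\Omega_T=\{\omega\in C([0,T];\mathbb{R}^d):\omega_0=0\}$; $L^1_G(\Omega_t)$ the completion of bounded Lipschitz cylinder functionals of the canonical process up to time $t$ under $\hat{\mathbb{E}}|\cdot|$; $C^1_G(0,T)$ the set of processes $S$ with $S_v\in L^1_G(\Omega_v)$ for all $v$ and $v\mapsto S_v$ continuous in $\hat{\mathbb{E}}|\cdot|$. Standing assumptions: $l,u:[0,T]\to\mathbb{R}$ bounded continuous with $\inf_t(u_t-l_t)>0$; $\hbar:[0,T]\times\Omega_T\times\mathbb{R}\to\mathbb{R}$ with $(t,y)\mapsto\hbar(t,y)$ uniformly continuous uniformly in $\omega$, $y\mapsto\hbar(t,y)$ strictly increasing, $\hbar(t,y)\in L^1_G(\Omega_T)$, $\hat{\mathbb{E}}[\lim_{y\downarrow-\infty}\hbar(t,y)]<\inf_sl_s<\sup_su_s<\hat{\mathbb{E}}[\lim_{y\uparrow\infty}\hbar(t,y)]$,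 $|\hbar(t,y)|\le C_\hbar(1+|y|)$, and $\underline{c}|y-y'|\le|\hbar(t,y)-\hbar(t,y')|\le\overline{c}|y-y'|$ with constants $C_\hbar>0$, $0<\underline{c}\le\overline{c}$. For $X\in L^1_G(\Omega_t)$, $\overline{H}(t,x,X):=\hat{\mathbb{E}}[\hbar(t,x+X-\hat{\mathbb{E}}[X])]$, $x\in\mathbb{R}$ (continuous, strictly increasing, with limits $\mp\infty$ at $\mp\infty$); $L_t(X):=\overline{H}^{-1}(t,\cdot,X)(l_t)$ and $U_t(X):=\overline{H}^{-1}(t,\cdot,X)(u_t)$. *)

theory Defs
  imports "HOL-Analysis.Analysis"
begin

text \<open>E plays the role of the G-expectation, LG t the role of L^1_G(Omega_t),
  random variables are functions 'w => real (the sample space Omega_T is the abstract type 'w).\<close>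

definition G_framework :: "(('w \<Rightarrow> real) \<Rightarrow> real) \<Rightarrow> (real \<Rightarrow> ('w \<Rightarrow> real) set) \<Rightarrow> real \<Rightarrow> bool" where
  "G_framework E LG T \<longleftrightarrow>
     (\<forall>t\<in>{0..T}. (\<forall>c. (\<lambda>_. c) \<in> LG t)
        \<and> (\<forall>X\<in>LG t. \<forall>Y\<in>LG t. (\<lambda>w. X w + Y w) \<in> LG t)
        \<and> (\<forall>X\<in>LG t. \<forall>a. (\<lambda>w. a * X w) \<in> LG t)
        \<and> (\<forall>X\<in>LG t. (\<lambda>w. \<bar>X w\<bar>) \<in> LG t))
   \<and> (\<forall>s t. 0 \<le> s \<and> s \<le> t \<and> t \<le> T \<longrightarrow> LG s \<subseteq> LG t)
   \<and> (\<forall>X\<in>LG T. \<forall>Y\<in>LG T. (\<forall>w. X w \<le> Y w) \<longrightarrow> E X \<le> E Y)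
   \<and> (\<forall>c. E (\<lambda>_. c) = c)
   \<and> (\<forall>X\<in>LG T. \<forall>Y\<in>LG T. E (\<lambda>w. X w + Y w) \<le> E X + E Y)
   \<and> (\<forall>X\<in>LG T. \<forall>a\<ge>0. E (\<lambda>w. a * X w) = a * E X)
   \<and> (\<forall>f :: 'w \<Rightarrow> real \<Rightarrow> real. \<forall>Y\<in>LG T.
        (\<forall>y. (\<lambda>w. f w y) \<in> LG T) \<and> (\<exists>K. \<forall>w y y'. \<bar>f w y - f w y'\<bar> \<le> K * \<bar>y - y'\<bar>)
        \<longrightarrow> (\<lambda>w. f w (Y w)) \<in> LG T)"

definition CG1 :: "(('w \<Rightarrow> real) \<Rightarrow> real) \<Rightarrow> (real \<Rightarrow> ('w \<Rightarrow> real) set) \<Rightarrow> real \<Rightarrow> (real \<Rightarrow> 'w \<Rightarrow> real) set" where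
  "CG1 E LG T = {S. (\<forall>v\<in>{0..T}. S v \<in> LG v) \<and>
      (\<forall>v\<in>{0..T}. ((\<lambda>v'. E (\<lambda>w. \<bar>S v' w - S v w\<bar>)) \<longlongrightarrow> 0) (at v within {0..T}))}"

text \<open>\<open>Hbar E hb t x X\<close> is \<open>\<hat>E[hbar(t, x + X - \<hat>E[X])]\<close>; hb t y w = hbar(t,w,y).\<close>
definition Hbar :: "(('w \<Rightarrow> real) \<Rightarrow> real) \<Rightarrow> (real \<Rightarrow> real \<Rightarrow> 'w \<Rightarrow> real) \<Rightarrow> real \<Rightarrow> real \<Rightarrow> ('w \<Rightarrow> real) \<Rightarrow> real" where
  "Hbar E hb t x X = E (\<lambda>w. hb t (x + X w - E X) w)"

text \<open>\<open>Hinv E hb t X a\<close> = \<open>Hbar^{-1}(t,.,X)(a)\<close>; so L_t(X) = Hinv .. t X (l t), U_t(X) = Hinv .. t X (u t).\<close>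
definition Hinv :: "(('w \<Rightarrow> real) \<Rightarrow> real) \<Rightarrow> (real \<Rightarrow> real \<Rightarrow> 'w \<Rightarrow> real) \<Rightarrow> real \<Rightarrow> ('w \<Rightarrow> real) \<Rightarrow> real \<Rightarrow> real" where
  "Hinv E hb t X a = (THE x. Hbar E hb t x X = a)"

end

theory Submission
  imports Defs
begin

text \<open>For fixed \<open>t\<close> and \<open>X\<close>, the map \<open>x \<mapsto> Hbar(t, x, X)\<close> is increasing with slopes between
  \<open>c_lo\<close> and \<open>c_hi\<close>, hence a bijection of the real line whose inverse is \<open>1/c_lo\<close>-Lipschitz.
  Replacing \<open>X\<close> by \<open>X'\<close> moves \<open>Hbar\<close> by at most \<open>2 c_hi E|X - X'|\<close> (once through \<open>X\<close>, once
  through the centring term \<open>E X\<close>), and replacing \<open>t\<close> by \<open>s\<close> moves it by at most the modulus of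
  continuity of \<open>hbar\<close> in time. Inverting gives the Lipschitz estimate (ii), and together with
  the continuity of the level \<open>l\<close> or \<open>u\<close> and of \<open>S\<close> it gives the continuity (i); boundedness
  follows from compactness of \<open>[0, T]\<close>.\<close>

locale sublinear_expectation =
  fixes E :: "('w \<Rightarrow> real) \<Rightarrow> real"
    and L :: "('w \<Rightarrow> real) set"
  assumes const_mem: "(\<lambda>_. c) \<in> L"
    and add_mem: "X \<in> L \<Longrightarrow> Y \<in> L \<Longrightarrow> (\<lambda>w. X w + Y w) \<in> L"
    and scale_mem: "X \<in> L \<Longrightarrow> (\<lambda>w. a * X w) \<in> L"
    and abs_mem: "X \<in> L \<Longrightarrow> (\<lambda>w. \<bar>X w\<bar>) \<in> L"
    and lipschitz_comp_mem: "Y \<in> L \<Longrightarrow> (\<And>y. (\<lambda>w. f w y) \<in> L) \<Longrightarrow>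
      (\<And>w y y'. \<bar>f w y - f w y'\<bar> \<le> K * \<bar>y - y'\<bar>) \<Longrightarrow> (\<lambda>w. f w (Y w)) \<in> L"
    and E_mono: "X \<in> L \<Longrightarrow> Y \<in> L \<Longrightarrow> (\<And>w. X w \<le> Y w) \<Longrightarrow> E X \<le> E Y"
    and E_const: "E (\<lambda>_. c) = c"
    and E_subadd: "X \<in> L \<Longrightarrow> Y \<in> L \<Longrightarrow> E (\<lambda>w. X w + Y w) \<le> E X + E Y"
    and E_pos_homogeneous: "X \<in> L \<Longrightarrow> 0 \<le> a \<Longrightarrow> E (\<lambda>w. a * X w) = a * E X"
begin

lemma diff_mem: "X \<in> L \<Longrightarrow> Y \<in> L \<Longrightarrow> (\<lambda>w. X w - Y w) \<in> L"
  using add_mem[OF _ scale_mem[of Y "-1"], of X] by simp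

lemma E_add_const:
  assumes "X \<in> L"
  shows "E (\<lambda>w. X w + c) = E X + c"
proof -
  have "E (\<lambda>w. X w + c) \<le> E X + c"
    using E_subadd[OF assms const_mem, of c] by (simp add: E_const)
  moreover have "E X \<le> E (\<lambda>w. X w + c) - c"
    using E_subadd[OF add_mem[OF assms const_mem] const_mem, of c "-c"] by (simp add: E_const)
  ultimately show ?thesis
    by simp
qed

lemma E_diff_le:
  assumes "X \<in> L" "Y \<in> L"
  shows "E X - E Y \<le> E (\<lambda>w. X w - Y w)"
  using E_subadd[OF diff_mem[OF assms] assms(2)] by simp

lemma abs_E_diff_le:
  assumes "X \<in> L" "Y \<in> L" "Z \<in> L" "0 \<le> a"
    and bound: "\<And>w. \<bar>X w - Y w\<bar> \<le> a * Z w + b"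
  shows "\<bar>E X - E Y\<bar> \<le> a * E Z + b"
proof -
  have majorant: "(\<lambda>w. a * Z w + b) \<in> L"
    using add_mem[OF scale_mem[OF assms(3)] const_mem] .
  have E_majorant: "E (\<lambda>w. a * Z w + b) = a * E Z + b"
    using E_add_const[OF scale_mem[OF assms(3)]] E_pos_homogeneous[OF assms(3,4)] by simp
  have one_side: "E V - E W \<le> a * E Z + b"
    if "V \<in> L" "W \<in> L" "\<And>w. V w - W w \<le> a * Z w + b" for V W
  proof -
    have "E V - E W \<le> E (\<lambda>w. V w - W w)"
      using E_diff_le[OF that(1,2)] .
    also have "\<dots> \<le> E (\<lambda>w. a * Z w + b)"
      using E_mono[OF diff_mem[OF that(1,2)] majorant] that(3) .
    finally show ?thesis
      using E_majorant by simp
  qed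
  have "E X - E Y \<le> a * E Z + b"
    by (rule one_side[OF assms(1,2)]) (use bound abs_le_D1 in blast)
  moreover have "E Y - E X \<le> a * E Z + b"
    by (rule one_side[OF assms(2,1)]) (metis bound abs_le_D1 abs_minus_commute)
  ultimately show ?thesis
    by linarith
qed

lemma abs_E_diff_le_const:
  assumes "X \<in> L" "Y \<in> L" "\<And>w. \<bar>X w - Y w\<bar> \<le> b"
  shows "\<bar>E X - E Y\<bar> \<le> b"
  using abs_E_diff_le[OF assms(1,2) const_mem, of 0 b] assms(3) by simp

lemma abs_E_diff_le_E_abs:
  assumes "X \<in> L" "Y \<in> L"
  shows "\<bar>E X - E Y\<bar> \<le> E (\<lambda>w. \<bar>X w - Y w\<bar>)"
  using abs_E_diff_le[OF assms abs_mem[OF diff_mem[OF assms]], of 1 0] by simp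

end

lemma G_framework_sublinear_expectation:
  assumes "G_framework E LG T" "0 \<le> T"
  shows "sublinear_expectation E (LG T)"
proof -
  note G = assms(1)[unfolded G_framework_def]
  have "T \<in> {0..T}"
    using assms(2) by simp
  note closed = G[THEN conjunct1, THEN bspec, OF this]
  show ?thesis
    by unfold_locales (use closed G in blast)+
qed

lemma G_framework_LG_mono:
  "G_framework E LG T \<Longrightarrow> 0 \<le> s \<Longrightarrow> s \<le> T \<Longrightarrow> LG s \<subseteq> LG T"
  unfolding G_framework_def by blast

locale bilipschitz_driver = sublinear_expectation E L
  for E :: "('w \<Rightarrow> real) \<Rightarrow> real" and L :: "('w \<Rightarrow> real) set" +
  fixes I :: "real set"
    and hb :: "real \<Rightarrow> real \<Rightarrow> 'w \<Rightarrow> real"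
    and c_lo c_hi :: real
  assumes c_lo_pos: "0 < c_lo" and c_lo_le_c_hi: "c_lo \<le> c_hi"
    and hb_mem: "t \<in> I \<Longrightarrow> hb t y \<in> L"
    and hb_increment: "t \<in> I \<Longrightarrow> y \<le> y' \<Longrightarrow> hb t y w + c_lo * (y' - y) \<le> hb t y' w"
    and hb_lipschitz: "t \<in> I \<Longrightarrow> \<bar>hb t y w - hb t y' w\<bar> \<le> c_hi * \<bar>y - y'\<bar>"
begin

lemma hb_comp_mem:
  assumes "t \<in> I" "X \<in> L"
  shows "(\<lambda>w. hb t (x + X w - e) w) \<in> L"
proof -
  have "(\<lambda>w. (\<lambda>w y. hb t (x + y - e) w) w (X w)) \<in> L"
  proof (rule lipschitz_comp_mem[OF assms(2), where K = c_hi])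
    show "(\<lambda>w. hb t (x + y - e) w) \<in> L" for y
      using hb_mem[OF assms(1)] .
    show "\<bar>hb t (x + y - e) w - hb t (x + y' - e) w\<bar> \<le> c_hi * \<bar>y - y'\<bar>" for w y y'
      using hb_lipschitz[OF assms(1), of "x + y - e" w "x + y' - e"] by simp
  qed
  then show ?thesis
    by simp
qed

lemma Hbar_increment:
  assumes "t \<in> I" "X \<in> L" "x \<le> x'"
  shows "Hbar E hb t x X + c_lo * (x' - x) \<le> Hbar E hb t x' X"
proof -
  have "Hbar E hb t x X + c_lo * (x' - x) = E (\<lambda>w. hb t (x + X w - E X) w + c_lo * (x' - x))"
    unfolding Hbar_def using E_add_const[OF hb_comp_mem[OF assms(1,2)]] by simp
  also have "\<dots> \<le> Hbar E hb t x' X"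
    unfolding Hbar_def
  proof (rule E_mono[OF add_mem[OF hb_comp_mem[OF assms(1,2)] const_mem] hb_comp_mem[OF assms(1,2)]])
    show "hb t (x + X w - E X) w + c_lo * (x' - x) \<le> hb t (x' + X w - E X) w" for w
      using hb_increment[OF assms(1), of "x + X w - E X" "x' + X w - E X" w] assms(3) by simp
  qed
  finally show ?thesis .
qed

lemma Hbar_lower_bound:
  assumes "t \<in> I" "X \<in> L"
  shows "c_lo * \<bar>x - x'\<bar> \<le> \<bar>Hbar E hb t x X - Hbar E hb t x' X\<bar>"
  using Hbar_increment[OF assms, of x x'] Hbar_increment[OF assms, of x' x] by (cases "x \<le> x'") auto

lemma Hbar_lipschitz:
  assumes "t \<in> I" "X \<in> L"
  shows "\<bar>Hbar E hb t x X - Hbar E hb t x' X\<bar> \<le> c_hi * \<bar>x - x'\<bar>"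
  unfolding Hbar_def
proof (rule abs_E_diff_le_const[OF hb_comp_mem[OF assms] hb_comp_mem[OF assms]])
  show "\<bar>hb t (x + X w - E X) w - hb t (x' + X w - E X) w\<bar> \<le> c_hi * \<bar>x - x'\<bar>" for w
    using hb_lipschitz[OF assms(1), of "x + X w - E X" w "x' + X w - E X"] by simp
qed

lemma continuous_on_Hbar:
  assumes "t \<in> I" "X \<in> L"
  shows "continuous_on A (\<lambda>x. Hbar E hb t x X)"
proof (rule lipschitz_on_continuous_on)
  show "c_hi-lipschitz_on A (\<lambda>x. Hbar E hb t x X)"
    using Hbar_lipschitz[OF assms] c_lo_pos c_lo_le_c_hi by (intro lipschitz_onI) (auto simp: dist_real_def)
qed

lemma Hbar_ex1:
  assumes "t \<in> I" "X \<in> L"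
  shows "\<exists>!x. Hbar E hb t x X = a"
proof (rule ex_ex1I)
  define r where "r = \<bar>a - Hbar E hb t 0 X\<bar> / c_lo"
  have "r \<ge> 0"
    unfolding r_def using c_lo_pos by simp
  then have "Hbar E hb t (-r) X \<le> a" "a \<le> Hbar E hb t r X"
    using Hbar_increment[OF assms, of "-r" 0] Hbar_increment[OF assms, of 0 r] c_lo_pos
    by (auto simp: r_def)
  then show "\<exists>x. Hbar E hb t x X = a"
    using IVT'[OF _ _ _ continuous_on_Hbar[OF assms]] \<open>r \<ge> 0\<close> by (metis neg_le_0_iff_le order.trans)
next
  show "x = y" if "Hbar E hb t x X = a" "Hbar E hb t y X = a" for x y
    using that Hbar_lower_bound[OF assms, of x y] c_lo_pos by (simp add: mult_le_0_iff)
qed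

lemma Hbar_Hinv:
  assumes "t \<in> I" "X \<in> L"
  shows "Hbar E hb t (Hinv E hb t X a) X = a"
  unfolding Hinv_def by (rule theI'[OF Hbar_ex1[OF assms]])

lemma Hbar_lipschitz_rv:
  assumes "t \<in> I" "X \<in> L" "Y \<in> L"
  shows "\<bar>Hbar E hb t x X - Hbar E hb t x Y\<bar> \<le> 2 * c_hi * E (\<lambda>w. \<bar>X w - Y w\<bar>)"
proof -
  define D where "D = E (\<lambda>w. \<bar>X w - Y w\<bar>)"
  have c_hi_nonneg: "c_hi \<ge> 0"
    using c_lo_pos c_lo_le_c_hi by simp
  have "\<bar>Hbar E hb t x X - Hbar E hb t x Y\<bar> \<le> c_hi * D + c_hi * D"
    unfolding Hbar_def D_def
  proof (rule abs_E_diff_le[OF hb_comp_mem[OF assms(1,2)] hb_comp_mem[OF assms(1,3)]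
        abs_mem[OF diff_mem[OF assms(2,3)]] c_hi_nonneg])
    fix w
    have "\<bar>hb t (x + X w - E X) w - hb t (x + Y w - E Y) w\<bar>
        \<le> c_hi * \<bar>(x + X w - E X) - (x + Y w - E Y)\<bar>"
      by (rule hb_lipschitz[OF assms(1)])
    also have "\<dots> \<le> c_hi * (\<bar>X w - Y w\<bar> + D)"
      using abs_E_diff_le_E_abs[OF assms(2,3)] unfolding D_def
      by (intro mult_left_mono[OF _ c_hi_nonneg]) linarith
    finally show "\<bar>hb t (x + X w - E X) w - hb t (x + Y w - E Y) w\<bar>
        \<le> c_hi * \<bar>X w - Y w\<bar> + c_hi * E (\<lambda>w. \<bar>X w - Y w\<bar>)"
      by (simp add: algebra_simps D_def)
  qed
  then show ?thesis
    unfolding D_def by simp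
qed

lemma Hbar_time_diff:
  assumes "t \<in> I" "s \<in> I" "X \<in> L" "\<And>y w. \<bar>hb t y w - hb s y w\<bar> \<le> K"
  shows "\<bar>Hbar E hb t x X - Hbar E hb s x X\<bar> \<le> K"
  unfolding Hbar_def
  by (rule abs_E_diff_le_const[OF hb_comp_mem[OF assms(1,3)] hb_comp_mem[OF assms(2,3)]])
    (use assms(4) in simp)

lemma Hinv_stability:
  assumes t: "t \<in> I" and s: "s \<in> I" and X: "X \<in> L" and Y: "Y \<in> L"
    and K: "\<And>y w. \<bar>hb t y w - hb s y w\<bar> \<le> K"
  shows "c_lo * \<bar>Hinv E hb t X a - Hinv E hb s Y b\<bar>
    \<le> \<bar>a - b\<bar> + K + 2 * c_hi * E (\<lambda>w. \<bar>X w - Y w\<bar>)"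
proof -
  define x y where "x = Hinv E hb t X a" and "y = Hinv E hb s Y b"
  have "c_lo * \<bar>x - y\<bar> \<le> \<bar>Hbar E hb t x X - Hbar E hb t y X\<bar>"
    by (rule Hbar_lower_bound[OF t X])
  also have "\<dots> \<le> \<bar>a - b\<bar> + K + 2 * c_hi * E (\<lambda>w. \<bar>X w - Y w\<bar>)"
    using Hbar_Hinv[OF t X, of a] Hbar_Hinv[OF s Y, of b]
      Hbar_time_diff[OF t s X K, of y] Hbar_lipschitz_rv[OF s X Y, of y]
    unfolding x_def y_def by linarith
  finally show ?thesis
    unfolding x_def y_def .
qed

lemma Hinv_lipschitz_rv:
  assumes "t \<in> I" "X \<in> L" "Y \<in> L"
  shows "\<bar>Hinv E hb t X a - Hinv E hb t Y a\<bar> \<le> 2 * c_hi / c_lo * E (\<lambda>w. \<bar>X w - Y w\<bar>)"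
proof -
  have "c_lo * \<bar>Hinv E hb t X a - Hinv E hb t Y a\<bar> \<le> 2 * c_hi * E (\<lambda>w. \<bar>X w - Y w\<bar>)"
    using Hinv_stability[OF assms(1,1,2,3), where K = 0 and a = a and b = a] by simp
  then show ?thesis
    using c_lo_pos by (simp add: pos_le_divide_eq mult.commute)
qed

lemma continuous_on_Hinv:
  assumes a: "continuous_on I a"
    and S: "\<And>t. t \<in> I \<Longrightarrow> S t \<in> L"
    and S_cont: "\<And>s. s \<in> I \<Longrightarrow> ((\<lambda>t. E (\<lambda>w. \<bar>S t w - S s w\<bar>)) \<longlongrightarrow> 0) (at s within I)"
    and hb_equicont: "\<forall>\<epsilon>>0. \<exists>\<delta>>0. \<forall>w. \<forall>t\<in>I. \<forall>s\<in>I. \<forall>y.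
      \<bar>t - s\<bar> < \<delta> \<longrightarrow> \<bar>hb t y w - hb s y w\<bar> < \<epsilon>"
  shows "continuous_on I (\<lambda>t. Hinv E hb t (S t) (a t))"
  unfolding continuous_on_def
proof (intro ballI tendstoI)
  fix s and e :: real
  assume s: "s \<in> I" and "e > 0"
  define \<epsilon> where "\<epsilon> = c_lo * e / 4"
  have "\<epsilon> > 0" and c_hi_pos: "c_hi > 0"
    unfolding \<epsilon>_def using \<open>e > 0\<close> c_lo_pos c_lo_le_c_hi by auto
  have level: "\<forall>\<^sub>F t in at s within I. \<bar>a t - a s\<bar> < \<epsilon>"
    using tendstoD[OF continuous_on_def[THEN iffD1, OF a, rule_format, OF s] \<open>\<epsilon> > 0\<close>]
    by (simp add: dist_real_def)
  have "\<epsilon> / c_hi > 0"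
    using \<open>\<epsilon> > 0\<close> c_hi_pos by simp
  from tendstoD[OF S_cont[OF s] this]
  have process: "\<forall>\<^sub>F t in at s within I. c_hi * E (\<lambda>w. \<bar>S t w - S s w\<bar>) < \<epsilon>"
    by eventually_elim
      (use c_hi_pos in \<open>simp add: dist_real_def abs_less_iff pos_less_divide_eq mult.commute\<close>)
  obtain \<delta> where "\<delta> > 0"
    and \<delta>: "\<And>w t y. t \<in> I \<Longrightarrow> \<bar>t - s\<bar> < \<delta> \<Longrightarrow> \<bar>hb t y w - hb s y w\<bar> < \<epsilon>"
    using hb_equicont \<open>\<epsilon> > 0\<close> s by metis
  have driver: "\<forall>\<^sub>F t in at s within I. t \<in> I \<and> (\<forall>y w. \<bar>hb t y w - hb s y w\<bar> \<le> \<epsilon>)"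
    unfolding eventually_at using \<open>\<delta> > 0\<close> \<delta> by (auto simp: dist_real_def less_imp_le)
  show "\<forall>\<^sub>F t in at s within I. dist (Hinv E hb t (S t) (a t)) (Hinv E hb s (S s) (a s)) < e"
    using level process driver
  proof eventually_elim
    case (elim t)
    then have t: "t \<in> I"
      by simp
    have "c_lo * \<bar>Hinv E hb t (S t) (a t) - Hinv E hb s (S s) (a s)\<bar>
        \<le> \<bar>a t - a s\<bar> + \<epsilon> + 2 * c_hi * E (\<lambda>w. \<bar>S t w - S s w\<bar>)"
      by (rule Hinv_stability[OF t s S[OF t] S[OF s]]) (use elim in simp)
    also have "\<dots> < c_lo * e"
      using elim unfolding \<epsilon>_def by linarith
    finally show ?case
      using c_lo_pos by (simp add: dist_real_def)
  qed
qed

end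

lemma bilipschitz_driverI:
  assumes "sublinear_expectation E L" "0 < c_lo" "c_lo \<le> c_hi"
    and mono: "\<forall>t\<in>I. \<forall>w. strict_mono (\<lambda>y. hb t y w)"
    and "\<forall>t\<in>I. \<forall>y. hb t y \<in> L"
    and bilip: "\<forall>t\<in>I. \<forall>y y' w. c_lo * \<bar>y - y'\<bar> \<le> \<bar>hb t y w - hb t y' w\<bar>
      \<and> \<bar>hb t y w - hb t y' w\<bar> \<le> c_hi * \<bar>y - y'\<bar>"
  shows "bilipschitz_driver E L I hb c_lo c_hi"
proof -
  have "hb t y w + c_lo * (y' - y) \<le> hb t y' w" if t: "t \<in> I" and "y \<le> y'" for t y y' w
  proof -
    have "hb t y w \<le> hb t y' w"
      using strict_mono_mono[THEN monoD] mono t \<open>y \<le> y'\<close> by blast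
    moreover have "c_lo * \<bar>y' - y\<bar> \<le> \<bar>hb t y' w - hb t y w\<bar>"
      using bilip t by blast
    ultimately show ?thesis
      using \<open>y \<le> y'\<close> by simp
  qed
  then show ?thesis
    using assms unfolding bilipschitz_driver_def bilipschitz_driver_axioms_def by blast
qed

theorem proposition3p6:
  fixes E :: "('w \<Rightarrow> real) \<Rightarrow> real"
    and LG :: "real \<Rightarrow> ('w \<Rightarrow> real) set"
    and T :: real
    and l u :: "real \<Rightarrow> real"
    and hb :: "real \<Rightarrow> real \<Rightarrow> 'w \<Rightarrow> real"
    and C_h c_lo c_hi :: real
  assumes G: "G_framework E LG T"
    and l_cont: "continuous_on {0..T} l" and u_cont: "continuous_on {0..T} u"
    and l_bdd: "bounded (l ` {0..T})" and u_bdd: "bounded (u ` {0..T})"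
    and gap: "\<exists>\<delta>>0. \<forall>t\<in>{0..T}. u t - l t \<ge> \<delta>"
    and h_ucont: "\<forall>\<epsilon>>0. \<exists>\<delta>>0. \<forall>w. \<forall>t\<in>{0..T}. \<forall>t'\<in>{0..T}. \<forall>y y'.
                    \<bar>t - t'\<bar> < \<delta> \<and> \<bar>y - y'\<bar> < \<delta> \<longrightarrow> \<bar>hb t y w - hb t' y' w\<bar> < \<epsilon>"
    and h_mono: "\<forall>t\<in>{0..T}. \<forall>w. strict_mono (\<lambda>y. hb t y w)"
    and h_LG: "\<forall>t\<in>{0..T}. \<forall>y. hb t y \<in> LG T"
    and C_h_pos: "C_h > 0"
    and h_growth: "\<forall>t\<in>{0..T}. \<forall>y w. \<bar>hb t y w\<bar> \<le> C_h * (1 + \<bar>y\<bar>)"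
    and c_pos: "0 < c_lo" "c_lo \<le> c_hi"
    and h_bilip: "\<forall>t\<in>{0..T}. \<forall>y y' w. c_lo * \<bar>y - y'\<bar> \<le> \<bar>hb t y w - hb t y' w\<bar>
                    \<and> \<bar>hb t y w - hb t y' w\<bar> \<le> c_hi * \<bar>y - y'\<bar>"
  shows "(\<forall>S\<in>CG1 E LG T.
            continuous_on {0..T} (\<lambda>t. Hinv E hb t (S t) (l t))
          \<and> continuous_on {0..T} (\<lambda>t. Hinv E hb t (S t) (u t)))
       \<and> continuous_on {0..T} (\<lambda>t. Hinv E hb t (\<lambda>_. 0) (l t))
       \<and> continuous_on {0..T} (\<lambda>t. Hinv E hb t (\<lambda>_. 0) (u t))
       \<and> bounded ((\<lambda>t. Hinv E hb t (\<lambda>_. 0) (l t)) ` {0..T})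
       \<and> bounded ((\<lambda>t. Hinv E hb t (\<lambda>_. 0) (u t)) ` {0..T})
       \<and> (\<forall>t\<in>{0..T}. \<forall>X\<in>LG t. \<forall>X'\<in>LG t.
            \<bar>Hinv E hb t X (l t) - Hinv E hb t X' (l t)\<bar> \<le> 2 * c_hi / c_lo * E (\<lambda>w. \<bar>X w - X' w\<bar>)
          \<and> \<bar>Hinv E hb t X (u t) - Hinv E hb t X' (u t)\<bar> \<le> 2 * c_hi / c_lo * E (\<lambda>w. \<bar>X w - X' w\<bar>))"
proof (cases "0 \<le> T")
  case False
  then show ?thesis
    by simp
next
  case True
  interpret bilipschitz_driver E "LG T" "{0..T}" hb c_lo c_hi
    using G_framework_sublinear_expectation[OF G True] c_pos h_mono h_LG h_bilip
    by (rule bilipschitz_driverI)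
  have LG_T: "LG t \<subseteq> LG T" if "t \<in> {0..T}" for t
    using G_framework_LG_mono[OF G] that by simp
  have hb_equicont: "\<forall>\<epsilon>>0. \<exists>\<delta>>0. \<forall>w. \<forall>t\<in>{0..T}. \<forall>s\<in>{0..T}. \<forall>y.
      \<bar>t - s\<bar> < \<delta> \<longrightarrow> \<bar>hb t y w - hb s y w\<bar> < \<epsilon>"
    using h_ucont by (metis abs_zero diff_self)
  have cont_S: "continuous_on {0..T} (\<lambda>t. Hinv E hb t (S t) (a t))"
    if "S \<in> CG1 E LG T" "continuous_on {0..T} a" for S a
    using that LG_T unfolding CG1_def by (intro continuous_on_Hinv hb_equicont) blast+
  have cont_0: "continuous_on {0..T} (\<lambda>t. Hinv E hb t (\<lambda>_. 0) (a t))"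
    if "continuous_on {0..T} a" for a
    using continuous_on_Hinv[OF that const_mem _ hb_equicont] by (simp add: E_const)
  have bdd: "bounded ((\<lambda>t. Hinv E hb t (\<lambda>_. 0) (a t)) ` {0..T})"
    if "continuous_on {0..T} a" for a
    by (intro compact_imp_bounded compact_continuous_image cont_0[OF that] compact_Icc)
  have lip: "\<bar>Hinv E hb t X (a t) - Hinv E hb t X' (a t)\<bar> \<le> 2 * c_hi / c_lo * E (\<lambda>w. \<bar>X w - X' w\<bar>)"
    if "t \<in> {0..T}" "X \<in> LG t" "X' \<in> LG t" for t X X' a
    using Hinv_lipschitz_rv that LG_T by blast
  show ?thesis
    using cont_S cont_0 bdd lip l_cont u_cont by simp
qed

end
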